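(* Let $1\leq p\leq\infty$, let $\mathcal{M}$ be a $\mathrm{C}^{p+1}$-manifold of dimension $n\geq1$, let $\mathcal{V}$ be a complete $\mathrm{C}^p$-vector field on $\mathcal{M}$ every integral curve of which is periodic (constant integral curves included), let $\mathcal{B}$ be a complex Banach space, and let $\lambda\in\mathbb{C}$ with $\mathrm{Re}\,\lambda\neq0$. Then for every $\epsilon\geq0$ and every $y\in\mathrm{C}^1_{\mathcal{V}}(\mathcal{M};\mathcal{B})$ satisfying $\|\mathcal{V}y-\lambda y\|_\infty\leq\epsilon$, one has $\|y\|_\infty\leq\epsilon|\mathrm{Re}\,\lambda|^{-1}$.
   Context: $\|g\|_\infty=\sup_{x\in\mathcal{M}}\|g(x)\|$. For a map $y:\mathcal{M}\to\mathcal{B}$ that is differentiable along every integral curve of $\mathcal{V}$, $\mathcal{V}y(x)=(y\circ\gamma_x)'(0)$, where $\gamma_x$ is the integral curve of $\mathcal{V}$ with $\gamma_x(0)=x$. $\mathrm{C}^1_{\mathcal{V}}(\mathcal{M};\mathcal{B})$ denotes the set of maps $y:\mathcal{M}\to\mathcal{B}$ that are continuous, differentiable along every integral curve of $\mathcal{V}$, and such that $\mathcal{V}y$ is continuous. A vector field is complete if its flow is defined on all of $\mathbb{R}\times\mathcal{M}$. *)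

theory Defs
  imports "HOL-Analysis.Analysis" "HOL-Library.Extended_Nat"
begin

fun Ck :: "nat \<Rightarrow> 'a::real_normed_vector set \<Rightarrow> ('a \<Rightarrow> 'b::real_normed_vector) \<Rightarrow> bool" where
  "Ck 0 S f = continuous_on S f"
| "Ck (Suc k) S f = ((\<forall>x\<in>S. f differentiable (at x)) \<and>
       (\<forall>v. Ck k S (\<lambda>x. frechet_derivative f (at x) v)))"

definition Cp :: "enat \<Rightarrow> 'a::real_normed_vector set \<Rightarrow> ('a \<Rightarrow> 'b::real_normed_vector) \<Rightarrow> bool" where
  "Cp p S f = (\<forall>k::nat. enat k \<le> p \<longrightarrow> Ck k S f)"

type_synonym ('m, 'n) chart = "'m set \<times> ('m \<Rightarrow> real ^ 'n)"

definition is_chart :: "('m::topological_space, 'n::finite) chart \<Rightarrow> bool" where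
  "is_chart c = (case c of (U, \<psi>) \<Rightarrow>
      open U \<and> inj_on \<psi> U \<and> open (\<psi> ` U) \<and> continuous_on U \<psi> \<and>
      continuous_on (\<psi> ` U) (inv_into U \<psi>))"

definition Ck_atlas :: "enat \<Rightarrow> ('m::topological_space, 'n::finite) chart set \<Rightarrow> bool" where
  "Ck_atlas k A = ((\<forall>c\<in>A. is_chart c) \<and> (\<Union>c\<in>A. fst c) = UNIV \<and>
     (\<forall>(U,\<psi>)\<in>A. \<forall>(V,\<phi>)\<in>A. Cp k (\<psi> ` (U \<inter> V)) (\<phi> \<circ> inv_into U \<psi>)))"

text \<open>A vector field is given by its local representatives X c x \<in> real^'n (the components
  of the tangent vector at x in the chart c), subject to the transformation rule between
  charts; it is C^p if all local representatives are C^p in the chart coordinates.\<close>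
definition Cp_vector_field ::
  "enat \<Rightarrow> ('m::topological_space, 'n::finite) chart set \<Rightarrow>
   (('m, 'n) chart \<Rightarrow> 'm \<Rightarrow> real ^ 'n) \<Rightarrow> bool" where
  "Cp_vector_field p A X =
    ((\<forall>(U,\<psi>)\<in>A. Cp p (\<psi> ` U) (\<lambda>u. X (U,\<psi>) (inv_into U \<psi> u))) \<and>
     (\<forall>(U,\<psi>)\<in>A. \<forall>(V,\<phi>)\<in>A. \<forall>x\<in>U \<inter> V.
        X (V,\<phi>) x = frechet_derivative (\<phi> \<circ> inv_into U \<psi>) (at (\<psi> x)) (X (U,\<psi>) x)))"

definition integral_curve ::
  "('m::topological_space, 'n::finite) chart set \<Rightarrow> (('m, 'n) chart \<Rightarrow> 'm \<Rightarrow> real ^ 'n) \<Rightarrow>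
   (real \<Rightarrow> 'm) \<Rightarrow> bool" where
  "integral_curve A X \<gamma> = (continuous_on UNIV \<gamma> \<and>
     (\<forall>t. \<forall>(U,\<psi>)\<in>A. \<gamma> t \<in> U \<longrightarrow>
        ((\<psi> \<circ> \<gamma>) has_vector_derivative X (U,\<psi>) (\<gamma> t)) (at t)))"

definition complete_vf :: "('m::topological_space, 'n::finite) chart set \<Rightarrow>
   (('m, 'n) chart \<Rightarrow> 'm \<Rightarrow> real ^ 'n) \<Rightarrow> bool" where
  "complete_vf A X = (\<forall>x. \<exists>\<gamma>. integral_curve A X \<gamma> \<and> \<gamma> 0 = x)"

definition all_orbits_periodic :: "('m::topological_space, 'n::finite) chart set \<Rightarrow>
   (('m, 'n) chart \<Rightarrow> 'm \<Rightarrow> real ^ 'n) \<Rightarrow> bool" where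
  "all_orbits_periodic A X =
     (\<forall>\<gamma>. integral_curve A X \<gamma> \<longrightarrow> (\<exists>T>0. \<forall>t. \<gamma> (t + T) = \<gamma> t))"

definition lie_deriv :: "('m::topological_space, 'n::finite) chart set \<Rightarrow>
   (('m, 'n) chart \<Rightarrow> 'm \<Rightarrow> real ^ 'n) \<Rightarrow> ('m \<Rightarrow> 'b::real_normed_vector) \<Rightarrow> 'm \<Rightarrow> 'b" where
  "lie_deriv A X y x =
     vector_derivative (y \<circ> (SOME \<gamma>. integral_curve A X \<gamma> \<and> \<gamma> 0 = x)) (at 0)"

definition C1_V :: "('m::topological_space, 'n::finite) chart set \<Rightarrow>
   (('m, 'n) chart \<Rightarrow> 'm \<Rightarrow> real ^ 'n) \<Rightarrow> ('m \<Rightarrow> 'b::real_normed_vector) \<Rightarrow> bool" where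
  "C1_V A X y = (continuous_on UNIV y \<and>
     (\<forall>\<gamma>. integral_curve A X \<gamma> \<longrightarrow> (\<forall>t. (y \<circ> \<gamma>) differentiable (at t))) \<and>
     continuous_on UNIV (lie_deriv A X y))"

text \<open>A complex Banach space is a real Banach space 'b together with a real-linear J
  (multiplication by i) with J (J v) = -v and norm ((a + i b) v) = |a + i b| norm v.\<close>
definition complex_structure :: "('b::real_normed_vector \<Rightarrow> 'b) \<Rightarrow> bool" where
  "complex_structure J = (linear J \<and> (\<forall>v. J (J v) = - v) \<and>
     (\<forall>a b v. norm (a *\<^sub>R v + b *\<^sub>R J v) = cmod (Complex a b) * norm v))"

definition cscale :: "('b::real_normed_vector \<Rightarrow> 'b) \<Rightarrow> complex \<Rightarrow> 'b \<Rightarrow> 'b" where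
  "cscale J z v = Re z *\<^sub>R v + Im z *\<^sub>R J v"

end

theory Submission
  imports Defs
begin

text \<open>Along an integral curve \<open>\<gamma>\<close>, the function \<open>y \<circ> \<gamma>\<close> has derivative \<open>\<V>y \<circ> \<gamma>\<close>; since the
  orbit is periodic, \<open>\<parallel>y \<circ> \<gamma>\<parallel>\<close> attains its maximum at some \<open>t\<^sub>0\<close>. Moving from \<open>t\<^sub>0\<close> a short time
  \<open>k\<close> with the sign of \<open>Re \<lambda>\<close> changes \<open>y\<close> by about \<open>k \<lambda> y + k (\<V>y - \<lambda> y)\<close>; the first term
  would increase the norm at rate \<open>|Re \<lambda>| \<parallel>y\<parallel>\<close>, which the maximality of \<open>t\<^sub>0\<close> forbids unless
  the defect term compensates, i.e. \<open>|Re \<lambda>| \<parallel>y(\<gamma> t\<^sub>0)\<parallel> \<le> \<epsilon>\<close>.\<close>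

lemma has_vector_derivative_compose_add:
  assumes "(f has_vector_derivative v) (at (t + x))"
  shows "((\<lambda>s. f (t + s)) has_vector_derivative v) (at x)"
  using vector_diff_chain_at[of "(+) t" 1 x f v] assms shift_has_derivative_id[of t]
  by (simp add: comp_def has_vector_derivative_def)

lemma periodic_plus_of_int:
  fixes f :: "real \<Rightarrow> 'a"
  assumes per: "\<And>t. f (t + T) = f t"
  shows "f (t + of_int m * T) = f t"
proof (induction m rule: int_induct[where k = 0])
  case (step1 i)
  then show ?case using per[of "t + of_int i * T"] by (simp add: algebra_simps)
next
  case (step2 i)
  then show ?case using per[of "t + of_int (i - 1) * T"] by (simp add: algebra_simps)
qed simp

lemma periodic_continuous_attains_sup:
  fixes f :: "real \<Rightarrow> 'a::linorder_topology"
  assumes cont: "continuous_on UNIV f" and "T > 0" and per: "\<And>t. f (t + T) = f t"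
  obtains t0 where "\<And>s. f s \<le> f t0"
proof -
  have "\<exists>t0\<in>{0..T}. \<forall>s\<in>{0..T}. f s \<le> f t0"
    using \<open>T > 0\<close> by (intro continuous_attains_sup continuous_on_subset[OF cont]) auto
  then obtain t0 where t0: "\<And>s. s \<in> {0..T} \<Longrightarrow> f s \<le> f t0"
    by blast
  have "f s \<le> f t0" for s
  proof -
    define m where "m = \<lfloor>s / T\<rfloor>"
    have "of_int m \<le> s / T" "s / T < of_int m + 1"
      unfolding m_def by linarith+
    then have "of_int m * T \<le> s" "s < (of_int m + 1) * T"
      using \<open>T > 0\<close> by (simp_all add: field_simps)
    then have "s - of_int m * T \<in> {0..T}" by (simp add: algebra_simps)
    moreover have "f s = f (s - of_int m * T)"
      using periodic_plus_of_int[of f T "s - of_int m * T" m, OF per] by simp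
    ultimately show ?thesis using t0 by simp
  qed
  then show ?thesis using that by blast
qed

lemma integral_curve_shift:
  assumes "integral_curve A X \<gamma>"
  shows "integral_curve A X (\<lambda>s. \<gamma> (t + s))"
proof -
  have "continuous_on UNIV (\<lambda>s. \<gamma> (t + s))"
    using assms unfolding integral_curve_def
    by (auto intro!: continuous_on_compose2[of UNIV \<gamma>] continuous_intros)
  moreover have "((\<psi> \<circ> (\<lambda>s. \<gamma> (t + s))) has_vector_derivative X (U, \<psi>) (\<gamma> (t + s))) (at s)"
    if "(U, \<psi>) \<in> A" "\<gamma> (t + s) \<in> U" for U \<psi> s
  proof -
    have "((\<psi> \<circ> \<gamma>) has_vector_derivative X (U, \<psi>) (\<gamma> (t + s))) (at (t + s))"
      using assms that unfolding integral_curve_def by blast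
    then show ?thesis
      using has_vector_derivative_compose_add[of "\<psi> \<circ> \<gamma>"] by (simp add: comp_def)
  qed
  ultimately show ?thesis
    unfolding integral_curve_def by blast
qed

lemma integral_curve_splice:
  assumes \<gamma>: "integral_curve A X \<gamma>" and \<delta>: "integral_curve A X \<delta>" and "\<gamma> 0 = \<delta> 0"
  shows "integral_curve A X (\<lambda>s. if s \<le> 0 then \<gamma> s else \<delta> s)"
    (is "integral_curve A X ?\<sigma>")
proof -
  have "continuous_on UNIV ?\<sigma>"
    using \<gamma> \<delta> \<open>\<gamma> 0 = \<delta> 0\<close> unfolding integral_curve_def
    by (intro continuous_on_cases_le) (auto intro: continuous_on_subset continuous_on_id)
  moreover have "((\<psi> \<circ> ?\<sigma>) has_vector_derivative X (U,\<psi>) (?\<sigma> t)) (at t)"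
    if c: "(U,\<psi>) \<in> A" and inU: "?\<sigma> t \<in> U" for U \<psi> t
  proof -
    have closures: "closure {..0::real} \<inter> closure {0<..} = {0}" by auto
    have unfold_if: "\<psi> \<circ> ?\<sigma> = (\<lambda>s. if s \<in> {..0} then (\<psi> \<circ> \<gamma>) s else (\<psi> \<circ> \<delta>) s)"
      "X (U,\<psi>) (?\<sigma> t) = (if t \<in> {..0} then X (U,\<psi>) (\<gamma> t) else X (U,\<psi>) (\<delta> t))"
      by auto
    have "((\<lambda>s. if s \<in> {..0} then (\<psi> \<circ> \<gamma>) s else (\<psi> \<circ> \<delta>) s) has_vector_derivative
        (if t \<in> {..0} then X (U,\<psi>) (\<gamma> t) else X (U,\<psi>) (\<delta> t))) (at t within UNIV)"
    proof (rule has_vector_derivative_If_within_closures[where S = "{..0}" and T = "{0<..}"])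
      assume "t \<in> {..0} \<union> (closure {..0} \<inter> closure {0<..})"
      then have "\<gamma> t \<in> U" using inU by (simp add: closures)
      then have "((\<psi> \<circ> \<gamma>) has_vector_derivative X (U,\<psi>) (\<gamma> t)) (at t)"
        using \<gamma> c unfolding integral_curve_def by blast
      then show "((\<psi> \<circ> \<gamma>) has_vector_derivative X (U,\<psi>) (\<gamma> t))
          (at t within {..0} \<union> (closure {..0} \<inter> closure {0<..}))"
        by (rule has_vector_derivative_at_within)
    next
      assume "t \<in> {0<..} \<union> (closure {..0} \<inter> closure {0<..})"
      then have "\<delta> t \<in> U" using inU \<open>\<gamma> 0 = \<delta> 0\<close> by (cases "t = 0") (auto simp: closures)
      then have "((\<psi> \<circ> \<delta>) has_vector_derivative X (U,\<psi>) (\<delta> t)) (at t)"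
        using \<delta> c unfolding integral_curve_def by blast
      then show "((\<psi> \<circ> \<delta>) has_vector_derivative X (U,\<psi>) (\<delta> t))
          (at t within {0<..} \<union> (closure {..0} \<inter> closure {0<..}))"
        by (rule has_vector_derivative_at_within)
    qed (use \<open>\<gamma> 0 = \<delta> 0\<close> in \<open>auto simp: closures\<close>)
    then show ?thesis
      unfolding unfold_if .
  qed
  ultimately show ?thesis
    unfolding integral_curve_def by blast
qed

lemma has_vector_derivative_unique_agree_left:
  fixes f g :: "real \<Rightarrow> 'a::real_normed_vector"
  assumes f: "(f has_vector_derivative D) (at x)" and g: "(g has_vector_derivative E) (at x)"
    and agree: "\<And>s. s \<le> x \<Longrightarrow> f s = g s"
  shows "D = E"
proof -
  from has_vector_derivative_at_within[OF f]
  have "(g has_vector_derivative D) (at x within {..x})"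
    by (rule has_vector_derivative_transform[rotated 2]) (use agree in auto)
  then have "(g has_vector_derivative D) (at_left x)"
    by (rule has_vector_derivative_within_subset) auto
  moreover have "(g has_vector_derivative E) (at_left x)"
    using g by (rule has_vector_derivative_at_within)
  ultimately show ?thesis
    by (intro vector_derivative_unique_within) (simp_all add: trivial_limit_at_left_real)
qed

lemma has_vector_derivative_unique_agree_right:
  fixes f g :: "real \<Rightarrow> 'a::real_normed_vector"
  assumes f: "(f has_vector_derivative D) (at x)" and g: "(g has_vector_derivative E) (at x)"
    and agree: "\<And>s. x \<le> s \<Longrightarrow> f s = g s"
  shows "D = E"
proof -
  from has_vector_derivative_at_within[OF f]
  have "(g has_vector_derivative D) (at x within {x..})"
    by (rule has_vector_derivative_transform[rotated 2]) (use agree in auto)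
  then have "(g has_vector_derivative D) (at_right x)"
    by (rule has_vector_derivative_within_subset) auto
  moreover have "(g has_vector_derivative E) (at_right x)"
    using g by (rule has_vector_derivative_at_within)
  ultimately show ?thesis
    by (intro vector_derivative_unique_within) (simp_all add: trivial_limit_at_right_real)
qed

text \<open>Integral curves need not be unique, so the curve chosen by \<^const>\<open>lie_deriv\<close> through
  \<open>\<gamma> t\<close> may differ from \<open>\<gamma>\<close>. Splicing the two at \<open>\<gamma> t\<close> gives an integral curve along which \<open>y\<close> is
  differentiable, which forces the two one-sided derivatives to agree.\<close>

lemma integral_curve_has_lie_deriv:
  assumes "complete_vf A X" and y: "C1_V A X y" and \<gamma>: "integral_curve A X \<gamma>"
  shows "((y \<circ> \<gamma>) has_vector_derivative lie_deriv A X y (\<gamma> t)) (at t)"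
proof -
  define \<delta> where "\<delta> = (SOME \<delta>. integral_curve A X \<delta> \<and> \<delta> 0 = \<gamma> t)"
  have \<delta>: "integral_curve A X \<delta>" "\<delta> 0 = \<gamma> t"
    using \<open>complete_vf A X\<close> someI_ex[of "\<lambda>\<delta>. integral_curve A X \<delta> \<and> \<delta> 0 = \<gamma> t"]
    unfolding complete_vf_def \<delta>_def by blast+
  define \<sigma> where "\<sigma> = (\<lambda>s. if s \<le> 0 then \<gamma> (t + s) else \<delta> s)"
  have \<sigma>: "integral_curve A X \<sigma>"
    unfolding \<sigma>_def using integral_curve_splice[OF integral_curve_shift[OF \<gamma>] \<delta>(1)] \<delta>(2) by simp
  have deriv: "((y \<circ> c) has_vector_derivative vector_derivative (y \<circ> c) (at s)) (at s)"
    if "integral_curve A X c" for c s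
    using y that vector_derivative_works unfolding C1_V_def by blast
  define G where "G = vector_derivative (y \<circ> \<gamma>) (at t)"
  have "((\<lambda>s. (y \<circ> \<gamma>) (t + s)) has_vector_derivative G) (at 0)"
    using has_vector_derivative_compose_add[of "y \<circ> \<gamma>" G t 0] deriv[OF \<gamma>, of t]
    by (simp add: G_def)
  then have "vector_derivative (y \<circ> \<sigma>) (at 0) = G"
    by (rule has_vector_derivative_unique_agree_left[OF deriv[OF \<sigma>]]) (simp add: \<sigma>_def)
  moreover have "vector_derivative (y \<circ> \<sigma>) (at 0) = lie_deriv A X y (\<gamma> t)"
    using deriv[OF \<delta>(1), of 0] unfolding lie_deriv_def \<delta>_def[symmetric]
    by (rule has_vector_derivative_unique_agree_right[OF deriv[OF \<sigma>]]) (simp add: \<sigma>_def \<delta>(2))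
  ultimately show ?thesis
    using deriv[OF \<gamma>, of t] by (simp add: G_def)
qed

lemma norm_add_scaleR_cscale_ge:
  assumes "complex_structure J"
  shows "(1 + k * Re lam) * norm v \<le> norm (v + k *\<^sub>R cscale J lam v)"
proof -
  have "v + k *\<^sub>R cscale J lam v = (1 + k * Re lam) *\<^sub>R v + (k * Im lam) *\<^sub>R J v"
    by (simp add: cscale_def algebra_simps)
  then have "norm (v + k *\<^sub>R cscale J lam v) = cmod (Complex (1 + k * Re lam) (k * Im lam)) * norm v"
    using assms unfolding complex_structure_def by metis
  moreover have "1 + k * Re lam \<le> cmod (Complex (1 + k * Re lam) (k * Im lam))"
    using abs_Re_le_cmod[of "Complex (1 + k * Re lam) (k * Im lam)"] by simp
  ultimately show ?thesis by (simp add: mult_right_mono)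
qed

lemma abs_Re_mult_norm_le_at_norm_max:
  fixes g :: "real \<Rightarrow> 'b::real_normed_vector"
  assumes J: "complex_structure J" and g: "(g has_vector_derivative D) (at t0)"
    and max: "\<And>s. norm (g s) \<le> norm (g t0)"
  shows "\<bar>Re lam\<bar> * norm (g t0) \<le> norm (D - cscale J lam (g t0))"
proof (cases "Re lam = 0")
  case False
  show ?thesis
  proof (rule field_le_epsilon)
    fix e :: real
    assume "e > 0"
    with g obtain d where "d > 0"
      and d: "\<And>s. norm (s - t0) < d \<Longrightarrow> norm (g s - g t0 - (s - t0) *\<^sub>R D) \<le> e * norm (s - t0)"
      unfolding has_vector_derivative_def has_derivative_at_alt by blast
    define v where "v = g t0"
    define k where "k = sgn (Re lam) * (d / 2)"
    define E where "E = g (t0 + k) - v - k *\<^sub>R D"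
    have "\<bar>k\<bar> \<le> d / 2" and "\<bar>k\<bar> * \<bar>Re lam\<bar> = k * Re lam"
      using \<open>d > 0\<close> by (auto simp: k_def abs_mult sgn_if)
    have "norm E \<le> e * \<bar>k\<bar>"
      using d[of "t0 + k"] \<open>d > 0\<close> \<open>\<bar>k\<bar> \<le> d / 2\<close> by (simp add: E_def v_def)
    have "(1 + k * Re lam) * norm v \<le> norm (v + k *\<^sub>R cscale J lam v)"
      by (rule norm_add_scaleR_cscale_ge[OF J])
    also have "v + k *\<^sub>R cscale J lam v = g (t0 + k) - k *\<^sub>R (D - cscale J lam v) - E"
      by (simp add: E_def algebra_simps)
    also have "norm \<dots> \<le> norm (g (t0 + k)) + norm (k *\<^sub>R (D - cscale J lam v)) + norm E"
      by (meson add_mono norm_triangle_ineq4 order_trans order_refl)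
    also have "\<dots> \<le> norm v + \<bar>k\<bar> * norm (D - cscale J lam v) + e * \<bar>k\<bar>"
      using max[of "t0 + k"] \<open>norm E \<le> e * \<bar>k\<bar>\<close> by (simp add: v_def)
    finally have "k * Re lam * norm v \<le> \<bar>k\<bar> * (norm (D - cscale J lam v) + e)"
      by (simp add: algebra_simps)
    then have "\<bar>k\<bar> * (\<bar>Re lam\<bar> * norm v) \<le> \<bar>k\<bar> * (norm (D - cscale J lam v) + e)"
      by (metis \<open>\<bar>k\<bar> * \<bar>Re lam\<bar> = k * Re lam\<close> mult.assoc)
    moreover have "\<bar>k\<bar> > 0"
      using \<open>d > 0\<close> False by (simp add: k_def abs_mult sgn_if)
    ultimately show "\<bar>Re lam\<bar> * norm (g t0) \<le> norm (D - cscale J lam (g t0)) + e"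
      by (simp add: v_def)
  qed
qed simp

theorem corollary2p3:
  fixes p :: enat
    and A :: "('m::{t2_space, second_countable_topology}, 'n::finite) chart set"
    and X :: "('m, 'n) chart \<Rightarrow> 'm \<Rightarrow> real ^ 'n"
    and J :: "'b::banach \<Rightarrow> 'b"
    and lam :: complex and eps :: real
    and y :: "'m \<Rightarrow> 'b"
  assumes "1 \<le> p"
    and "Ck_atlas (p + 1) A"
    and "Cp_vector_field p A X"
    and "complete_vf A X"
    and "all_orbits_periodic A X"
    and "complex_structure J"
    and "Re lam \<noteq> 0"
    and "eps \<ge> 0"
    and "C1_V A X y"
    and "\<forall>x. norm (lie_deriv A X y x - cscale J lam (y x)) \<le> eps"
  shows "\<forall>x. norm (y x) \<le> eps / \<bar>Re lam\<bar>"
proof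
  fix x
  obtain \<gamma> where \<gamma>: "integral_curve A X \<gamma>" "\<gamma> 0 = x"
    using \<open>complete_vf A X\<close> unfolding complete_vf_def by blast
  obtain T where "T > 0" and per: "\<And>t. \<gamma> (t + T) = \<gamma> t"
    using \<open>all_orbits_periodic A X\<close> \<gamma>(1) unfolding all_orbits_periodic_def by blast
  have "continuous_on UNIV y" "continuous_on UNIV \<gamma>"
    using \<open>C1_V A X y\<close> \<gamma>(1) unfolding C1_V_def integral_curve_def by blast+
  then have "continuous_on UNIV (\<lambda>s. norm (y (\<gamma> s)))"
    using continuous_on_compose2[of UNIV y UNIV \<gamma>] continuous_on_norm by blast
  then obtain t0 where max: "\<And>s. norm (y (\<gamma> s)) \<le> norm (y (\<gamma> t0))"
    using periodic_continuous_attains_sup[OF _ \<open>T > 0\<close>] per by metis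
  have "\<bar>Re lam\<bar> * norm (y (\<gamma> t0)) \<le> norm (lie_deriv A X y (\<gamma> t0) - cscale J lam (y (\<gamma> t0)))"
    using abs_Re_mult_norm_le_at_norm_max[OF \<open>complex_structure J\<close>
        integral_curve_has_lie_deriv[OF \<open>complete_vf A X\<close> \<open>C1_V A X y\<close> \<gamma>(1)]] max
    by (simp add: comp_def)
  also have "\<dots> \<le> eps"
    using assms(10) by blast
  finally have "norm (y (\<gamma> t0)) \<le> eps / \<bar>Re lam\<bar>"
    using \<open>Re lam \<noteq> 0\<close> by (simp add: pos_le_divide_eq mult.commute)
  then show "norm (y x) \<le> eps / \<bar>Re lam\<bar>"
    using max[of 0] \<gamma>(2) by simp
qed

end
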